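(* Let $q$ be a prime power and let $\mathbf{G}\in\mathbb{F}_q^{k\times n}$ be a generator matrix of a linear $[n,k]_q$ code. Consider a coded storage system with files $f_1,\dots,f_k$ in which, for each $i\in[k]$, file $f_i$ has a given list $\mathcal{R}_i=(R_{i,1},\dots,R_{i,t_i})$ of $t_i\ge1$ recovery sets, each of size $1$ or $2$, and all servers have service rate $1$. Then: (i) if $\tilde{\boldsymbol{x}}^\star=(\tilde x^\star_{i,j})$ is a maximum matching vector in the graph representation of the code, the vector $\boldsymbol{\lambda}$ with $\lambda_i=\sum_{j=1}^{t_i}\tilde x^\star_{i,j}$ is a maximum demand vector in $\mathcal{S}_I(\mathbf{G})$; and (ii) for every maximum demand vector $\boldsymbol{\lambda}^\star$ of $\mathcal{S}_I(\mathbf{G})$ there exists a maximum matching vector $\tilde{\boldsymbol{x}}^\star$ in the graph representation with $\lambda^\star_i=\sum_{j=1}^{t_i}\tilde x^\star_{i,j}$ for all $i\in[k]$.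
   Context: Let $\mathbf{g}_1,\dots,\mathbf{g}_n$ be the columns of $\mathbf{G}$ and $\mathbf{e}_i$ the $i$-th unit vector. A set $R\subseteq[n]$ is a recovery set for file $f_i$ if there exist nonzero $\alpha_j\in\mathbb{F}_q$ ($j\in R$) with $\sum_{j\in R}\alpha_j\mathbf{g}_j=\mathbf{e}_i$. The integral service rate region $\mathcal{S}_I(\mathbf{G})$ is the set of $\boldsymbol{\lambda}$ for which there exist integers $\lambda_{i,j}\ge0$ with $\sum_{j=1}^{t_i}\lambda_{i,j}=\lambda_i$ for all $i$ and $\sum_{i=1}^k\sum_{j\in[t_i]:\,l\in R_{i,j}}\lambda_{i,j}\le1$ for every server $l\in[n]$. A maximum demand vector of $\mathcal{S}_I(\mathbf{G})$ is a $\boldsymbol{\lambda}\in\mathcal{S}_I(\mathbf{G})$ maximizing $\sum_i\lambda_i$ over $\mathcal{S}_I(\mathbf{G})$. The graph representation is the (multi)graph with vertex set $[n]$ plus one new dummy vertex $d_{i,j}$ for each recovery set $R_{i,j}$ of size 1, and edges indexed by $(i,j)$: if $R_{i,j}=\{a,b\}$ the edge joins $a$ and $b$; if $R_{i,j}=\{r\}$ it joins $r$ and $d_{i,j}$. A matching vector assigns $\tilde x_e\in\{0,1\}$ to edges so that at each vertex the sum over incident edges is at most 1; a maximum matching vector maximizes $\sum_e\tilde x_e$. *)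

theory Defs
  imports Main
begin

text \<open>Conventions: indices are 0-based. Files are 0..<k, servers 0..<n,
  recovery sets of file i are R i j for j < t i. The generator matrix
  G :: nat => nat => 'a is a k x n matrix over the finite field 'a
  (entry G r c, r < k, c < n); its columns are g_c = (G r c)_{r<k}.\<close>

definition generator_matrix :: "nat \<Rightarrow> nat \<Rightarrow> (nat \<Rightarrow> nat \<Rightarrow> 'a::field) \<Rightarrow> bool" where
  "generator_matrix k n G \<longleftrightarrow>
     (\<forall>c::nat \<Rightarrow> 'a. (\<forall>col<n. (\<Sum>r<k. c r * G r col) = 0) \<longrightarrow> (\<forall>r<k. c r = 0))"

definition is_recovery_set ::
  "nat \<Rightarrow> nat \<Rightarrow> (nat \<Rightarrow> nat \<Rightarrow> 'a::field) \<Rightarrow> nat \<Rightarrow> nat set \<Rightarrow> bool" where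
  "is_recovery_set k n G i R \<longleftrightarrow> R \<subseteq> {..<n} \<and>
     (\<exists>\<alpha>::nat \<Rightarrow> 'a. (\<forall>j\<in>R. \<alpha> j \<noteq> 0) \<and>
        (\<forall>r<k. (\<Sum>j\<in>R. \<alpha> j * G r j) = (if r = i then 1 else 0)))"

text \<open>Integral service rate region (all server rates equal to 1).\<close>
definition in_SI ::
  "nat \<Rightarrow> nat \<Rightarrow> (nat \<Rightarrow> nat) \<Rightarrow> (nat \<Rightarrow> nat \<Rightarrow> nat set) \<Rightarrow> (nat \<Rightarrow> nat) \<Rightarrow> bool" where
  "in_SI k n t R lam \<longleftrightarrow>
     (\<exists>y::nat \<Rightarrow> nat \<Rightarrow> nat.
        (\<forall>i<k. (\<Sum>j<t i. y i j) = lam i) \<and>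
        (\<forall>l<n. (\<Sum>i<k. \<Sum>j\<in>{j. j < t i \<and> l \<in> R i j}. y i j) \<le> 1))"

definition max_demand_vector ::
  "nat \<Rightarrow> nat \<Rightarrow> (nat \<Rightarrow> nat) \<Rightarrow> (nat \<Rightarrow> nat \<Rightarrow> nat set) \<Rightarrow> (nat \<Rightarrow> nat) \<Rightarrow> bool" where
  "max_demand_vector k n t R lam \<longleftrightarrow> in_SI k n t R lam \<and>
     (\<forall>lam'. in_SI k n t R lam' \<longrightarrow> (\<Sum>i<k. lam' i) \<le> (\<Sum>i<k. lam i))"

text \<open>Graph representation: vertices are servers (Inl l) and dummy vertices
  (Inr (i,j)), one per recovery set of size 1; edges are indexed by (i,j).\<close>
type_synonym vertex = "nat + (nat \<times> nat)"

definition edge_indices :: "nat \<Rightarrow> (nat \<Rightarrow> nat) \<Rightarrow> (nat \<times> nat) set" where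
  "edge_indices k t = Sigma {..<k} (\<lambda>i. {..<t i})"

definition vertices :: "nat \<Rightarrow> nat \<Rightarrow> (nat \<Rightarrow> nat) \<Rightarrow> (nat \<Rightarrow> nat \<Rightarrow> nat set) \<Rightarrow> vertex set" where
  "vertices k n t R = Inl ` {..<n} \<union> Inr ` {(i,j). (i,j) \<in> edge_indices k t \<and> card (R i j) = 1}"

definition edge_ends :: "(nat \<Rightarrow> nat \<Rightarrow> nat set) \<Rightarrow> nat \<Rightarrow> nat \<Rightarrow> vertex set" where
  "edge_ends R i j = (if card (R i j) = 1 then Inl ` R i j \<union> {Inr (i,j)} else Inl ` R i j)"

definition matching_vector ::
  "nat \<Rightarrow> nat \<Rightarrow> (nat \<Rightarrow> nat) \<Rightarrow> (nat \<Rightarrow> nat \<Rightarrow> nat set) \<Rightarrow> (nat \<Rightarrow> nat \<Rightarrow> nat) \<Rightarrow> bool" where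
  "matching_vector k n t R x \<longleftrightarrow>
     (\<forall>(i,j)\<in>edge_indices k t. x i j \<in> {0,1}) \<and>
     (\<forall>v\<in>vertices k n t R.
        (\<Sum>(i,j)\<in>{e\<in>edge_indices k t. v \<in> edge_ends R (fst e) (snd e)}. x i j) \<le> 1)"

definition max_matching_vector ::
  "nat \<Rightarrow> nat \<Rightarrow> (nat \<Rightarrow> nat) \<Rightarrow> (nat \<Rightarrow> nat \<Rightarrow> nat set) \<Rightarrow> (nat \<Rightarrow> nat \<Rightarrow> nat) \<Rightarrow> bool" where
  "max_matching_vector k n t R x \<longleftrightarrow> matching_vector k n t R x \<and>
     (\<forall>x'. matching_vector k n t R x' \<longrightarrow>
        (\<Sum>(i,j)\<in>edge_indices k t. x' i j) \<le> (\<Sum>(i,j)\<in>edge_indices k t. x i j))"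

end

theory Submission
  imports Defs
begin

text \<open>A dummy vertex d_{i,j} lies on the single edge (i,j), so its degree constraint is implied
  by x_{i,j} \<in> {0,1}, and the constraint at a server vertex is exactly the server's capacity
  constraint in the service rate region. Conversely, since every recovery set contains a server,
  an integral allocation of capacity 1 takes only the values 0 and 1. Hence matching vectors and
  integral allocations are the same objects, and the size of a matching is the total demand served
  by the corresponding allocation; maximizers therefore correspond to each other. The generator
  matrix is irrelevant, and the size bound on recovery sets is used only for their nonemptiness.\<close>

definition server_load ::
  "nat \<Rightarrow> (nat \<Rightarrow> nat) \<Rightarrow> (nat \<Rightarrow> nat \<Rightarrow> nat set) \<Rightarrow> (nat \<Rightarrow> nat \<Rightarrow> nat) \<Rightarrow> nat \<Rightarrow> nat" where
  "server_load k t R y l = (\<Sum>i<k. \<Sum>j\<in>{j. j < t i \<and> l \<in> R i j}. y i j)"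

definition feasible_allocation ::
  "nat \<Rightarrow> nat \<Rightarrow> (nat \<Rightarrow> nat) \<Rightarrow> (nat \<Rightarrow> nat \<Rightarrow> nat set) \<Rightarrow> (nat \<Rightarrow> nat \<Rightarrow> nat) \<Rightarrow> bool" where
  "feasible_allocation k n t R y \<longleftrightarrow> (\<forall>l<n. server_load k t R y l \<le> 1)"

lemma in_SI_iff_feasible_allocation:
  "in_SI k n t R lam \<longleftrightarrow>
     (\<exists>y. feasible_allocation k n t R y \<and> (\<forall>i<k. lam i = (\<Sum>j<t i. y i j)))"
  unfolding in_SI_def feasible_allocation_def server_load_def by (auto simp: eq_commute)

lemma sum_edge_indices:
  "(\<Sum>(i,j)\<in>edge_indices k t. x i j) = (\<Sum>i<k. \<Sum>j<t i. (x i j :: nat))"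
  unfolding edge_indices_def by (subst sum.Sigma) auto

lemma vertex_load_Inl:
  "(\<Sum>(i,j)\<in>{e\<in>edge_indices k t. Inl l \<in> edge_ends R (fst e) (snd e)}. x i j)
   = server_load k t R x l"
proof -
  have "{e\<in>edge_indices k t. Inl l \<in> edge_ends R (fst e) (snd e)}
        = Sigma {..<k} (\<lambda>i. {j. j < t i \<and> l \<in> R i j})"
    unfolding edge_indices_def edge_ends_def by auto
  then show ?thesis by (simp add: sum.Sigma server_load_def)
qed

lemma vertex_load_Inr_le_1:
  assumes "\<forall>(i,j)\<in>edge_indices k t. x i j \<in> {0,1}"
  shows "(\<Sum>(i,j)\<in>{e\<in>edge_indices k t. Inr p \<in> edge_ends R (fst e) (snd e)}. x i j) \<le> (1::nat)"
proof -
  have "{e\<in>edge_indices k t. Inr p \<in> edge_ends R (fst e) (snd e)} \<subseteq> {p} \<inter> edge_indices k t"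
    unfolding edge_ends_def by (auto split: if_splits)
  then consider "{e\<in>edge_indices k t. Inr p \<in> edge_ends R (fst e) (snd e)} = {}"
    | "{e\<in>edge_indices k t. Inr p \<in> edge_ends R (fst e) (snd e)} = {p}" "p \<in> edge_indices k t"
    by blast
  then show ?thesis
  proof cases
    case 1
    show ?thesis unfolding 1 by simp
  next
    case 2
    then show ?thesis using assms by (cases p) auto
  qed
qed

lemma matching_vector_iff:
  "matching_vector k n t R x \<longleftrightarrow>
     (\<forall>(i,j)\<in>edge_indices k t. x i j \<in> {0,1}) \<and> feasible_allocation k n t R x"
proof -
  have "(\<forall>v\<in>vertices k n t R.
          (\<Sum>(i,j)\<in>{e\<in>edge_indices k t. v \<in> edge_ends R (fst e) (snd e)}. x i j) \<le> 1)
        \<longleftrightarrow> feasible_allocation k n t R x"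
    if "\<forall>(i,j)\<in>edge_indices k t. x i j \<in> {0,1}"
  proof
    assume "\<forall>v\<in>vertices k n t R.
          (\<Sum>(i,j)\<in>{e\<in>edge_indices k t. v \<in> edge_ends R (fst e) (snd e)}. x i j) \<le> 1"
    then show "feasible_allocation k n t R x"
      unfolding feasible_allocation_def vertices_def by (auto simp flip: vertex_load_Inl)
  next
    assume "feasible_allocation k n t R x"
    then show "\<forall>v\<in>vertices k n t R.
          (\<Sum>(i,j)\<in>{e\<in>edge_indices k t. v \<in> edge_ends R (fst e) (snd e)}. x i j) \<le> 1"
      using vertex_load_Inr_le_1[OF that]
      unfolding feasible_allocation_def vertices_def by (auto simp: vertex_load_Inl)
  qed
  then show ?thesis
    unfolding matching_vector_def by blast
qed

lemma feasible_allocation_le_1: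
  assumes sets: "\<forall>i<k. \<forall>j<t i. R i j \<noteq> {} \<and> R i j \<subseteq> {..<n}"
    and y: "feasible_allocation k n t R y"
    and ij: "i < k" "j < t i"
  shows "y i j \<le> 1"
proof -
  obtain l where l: "l \<in> R i j" "l < n" using sets ij by blast
  have "y i j \<le> (\<Sum>j\<in>{j. j < t i \<and> l \<in> R i j}. y i j)"
    by (rule member_le_sum) (use l ij in auto)
  also have "\<dots> \<le> server_load k t R y l"
    unfolding server_load_def by (rule member_le_sum) (use ij in auto)
  also have "\<dots> \<le> 1" using y l unfolding feasible_allocation_def by auto
  finally show ?thesis .
qed

lemma matching_vector_iff_feasible_allocation:
  assumes "\<forall>i<k. \<forall>j<t i. R i j \<noteq> {} \<and> R i j \<subseteq> {..<n}"
  shows "matching_vector k n t R x \<longleftrightarrow> feasible_allocation k n t R x"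
  using feasible_allocation_le_1[OF assms, of x] matching_vector_iff[of k n t R x]
  unfolding edge_indices_def by fastforce

lemma max_demand_vector_of_max_matching_vector:
  assumes sets: "\<forall>i<k. \<forall>j<t i. R i j \<noteq> {} \<and> R i j \<subseteq> {..<n}"
    and x: "max_matching_vector k n t R x"
  shows "max_demand_vector k n t R (\<lambda>i. \<Sum>j<t i. x i j)"
  unfolding max_demand_vector_def
proof (intro conjI allI impI)
  show "in_SI k n t R (\<lambda>i. \<Sum>j<t i. x i j)"
    using x by (auto simp: in_SI_iff_feasible_allocation max_matching_vector_def matching_vector_iff)
  fix lam assume "in_SI k n t R lam"
  then obtain y where y: "feasible_allocation k n t R y" and lam: "\<forall>i<k. lam i = (\<Sum>j<t i. y i j)"
    by (auto simp: in_SI_iff_feasible_allocation)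
  have "(\<Sum>i<k. lam i) = (\<Sum>(i,j)\<in>edge_indices k t. y i j)"
    using lam by (simp add: sum_edge_indices)
  also have "\<dots> \<le> (\<Sum>(i,j)\<in>edge_indices k t. x i j)"
    using x y matching_vector_iff_feasible_allocation[OF sets]
    unfolding max_matching_vector_def by blast
  also have "\<dots> = (\<Sum>i<k. \<Sum>j<t i. x i j)" by (simp add: sum_edge_indices)
  finally show "(\<Sum>i<k. lam i) \<le> (\<Sum>i<k. \<Sum>j<t i. x i j)" .
qed

lemma max_matching_vector_of_max_demand_vector:
  assumes sets: "\<forall>i<k. \<forall>j<t i. R i j \<noteq> {} \<and> R i j \<subseteq> {..<n}"
    and lam: "max_demand_vector k n t R lam"
  shows "\<exists>x. max_matching_vector k n t R x \<and> (\<forall>i<k. lam i = (\<Sum>j<t i. x i j))"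
proof -
  obtain y where y: "feasible_allocation k n t R y" and lam_y: "\<forall>i<k. lam i = (\<Sum>j<t i. y i j)"
    using lam by (auto simp: max_demand_vector_def in_SI_iff_feasible_allocation)
  have "max_matching_vector k n t R y"
    unfolding max_matching_vector_def
  proof (intro conjI allI impI)
    show "matching_vector k n t R y"
      using y matching_vector_iff_feasible_allocation[OF sets] by blast
    fix x assume "matching_vector k n t R x"
    then have "in_SI k n t R (\<lambda>i. \<Sum>j<t i. x i j)"
      by (auto simp: in_SI_iff_feasible_allocation matching_vector_iff)
    then have "(\<Sum>i<k. \<Sum>j<t i. x i j) \<le> (\<Sum>i<k. lam i)"
      using lam unfolding max_demand_vector_def by blast
    also have "\<dots> = (\<Sum>i<k. \<Sum>j<t i. y i j)" using lam_y by simp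
    finally show "(\<Sum>(i,j)\<in>edge_indices k t. x i j) \<le> (\<Sum>(i,j)\<in>edge_indices k t. y i j)"
      by (simp add: sum_edge_indices)
  qed
  then show ?thesis using lam_y by blast
qed

theorem corollary4:
  fixes G :: "nat \<Rightarrow> nat \<Rightarrow> 'a::{finite,field}"
    and k n :: nat
    and t :: "nat \<Rightarrow> nat"
    and R :: "nat \<Rightarrow> nat \<Rightarrow> nat set"
  assumes gen: "generator_matrix k n G"
    and t_pos: "\<forall>i<k. t i \<ge> 1"
    and rec: "\<forall>i<k. \<forall>j<t i. is_recovery_set k n G i (R i j)"
    and sizes: "\<forall>i<k. \<forall>j<t i. card (R i j) = 1 \<or> card (R i j) = 2"
  shows "(\<forall>x. max_matching_vector k n t R x \<longrightarrow>
            max_demand_vector k n t R (\<lambda>i. \<Sum>j<t i. x i j))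
       \<and> (\<forall>lam. max_demand_vector k n t R lam \<longrightarrow>
            (\<exists>x. max_matching_vector k n t R x \<and> (\<forall>i<k. lam i = (\<Sum>j<t i. x i j))))"
proof -
  have sets: "\<forall>i<k. \<forall>j<t i. R i j \<noteq> {} \<and> R i j \<subseteq> {..<n}"
  proof (intro allI impI conjI)
    fix i j assume "i < k" "j < t i"
    then show "R i j \<noteq> {}" using sizes by fastforce
    show "R i j \<subseteq> {..<n}" using rec \<open>i < k\<close> \<open>j < t i\<close> unfolding is_recovery_set_def by blast
  qed
  then show ?thesis
    using max_demand_vector_of_max_matching_vector max_matching_vector_of_max_demand_vector
    by blast
qed

end
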